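(* Assume $(G)$ and let $\lambda\in(0,\lambda_1)$. Then the set $\{\mu>0:\ (\mathcal Q_{\lambda,\mu})\text{ has a solution}\}$ is bounded above, i.e. $\mu^*(\lambda):=\sup\{\mu>0:(\mathcal Q_{\lambda,\mu})\text{ has a solution}\}<+\infty$.
   Context: Let $N\ge3$, $\Omega\subset\mathbb R^N$ a bounded domain with smooth boundary, $2^*=2N/(N-2)$, $g\in H^{1/2}(\partial\Omega)\cap C(\partial\Omega)$ satisfying $(G)$: $g\ge0$ and $g\not\equiv0$. Let $\varphi$ be the harmonic function in $\Omega$ with $\varphi=g$ on $\partial\Omega$ (so $\varphi\ge0$). $\lambda_1$ is the first eigenvalue of $-\Delta$ on $H_0^1(\Omega)$. For $\lambda,\mu\ge0$, a solution of $(\mathcal Q_{\lambda,\mu})$ is a function $v\in H_0^1(\Omega)$ with $v>0$ in $\Omega$ which weakly solves $-\Delta v=\lambda(v+\mu\varphi)+(v+\mu\varphi)^{2^*-1}$ in $\Omega$. *)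

theory Defs
  imports "HOL-Analysis.Analysis"
begin

definition pdiff :: "'n::finite \<Rightarrow> (real^'n \<Rightarrow> real) \<Rightarrow> real^'n \<Rightarrow> real" where
  "pdiff i f x = deriv (\<lambda>t. f (x + t *\<^sub>R axis i 1)) 0"

definition grad_cl :: "(real^'n::finite \<Rightarrow> real) \<Rightarrow> real^'n \<Rightarrow> real^'n" where
  "grad_cl f x = (\<chi> i. pdiff i f x)"

definition smooth_on :: "(real^'n::finite) set \<Rightarrow> (real^'n \<Rightarrow> real) \<Rightarrow> bool" where
  "smooth_on S f \<longleftrightarrow>
     (\<forall>is. continuous_on S (foldr pdiff is f) \<and>
        (\<forall>i. \<forall>x\<in>S. (\<lambda>t. foldr pdiff is f (x + t *\<^sub>R axis i 1)) field_differentiable (at 0)))"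

(* smooth boundary: locally, after an orthogonal change of coordinates, the domain is the
   region above the graph of a C^infinity function *)
definition smooth_boundary :: "(real^'n::finite) set \<Rightarrow> bool" where
  "smooth_boundary \<Omega> \<longleftrightarrow>
     (\<forall>x0\<in>frontier \<Omega>. \<exists>r>0. \<exists>(Q::real^'n \<Rightarrow> real^'n) (k::'n) (\<gamma>::real^'n \<Rightarrow> real).
        orthogonal_transformation Q \<and> smooth_on UNIV \<gamma> \<and>
        (\<forall>(x::real^'n) (t::real). \<gamma> (x + t *\<^sub>R axis k (1::real)) = \<gamma> x) \<and>
        \<Omega> \<inter> ball x0 r = {x \<in> ball x0 r. (Q x) $ k > \<gamma> (Q x)})"

definition test_fun :: "(real^'n::finite) set \<Rightarrow> (real^'n \<Rightarrow> real) \<Rightarrow> bool" where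
  "test_fun \<Omega> \<psi> \<longleftrightarrow> smooth_on UNIV \<psi> \<and> compact (closure {x. \<psi> x \<noteq> 0}) \<and>
      closure {x. \<psi> x \<noteq> 0} \<subseteq> \<Omega>"

definition L2_on :: "(real^'n::finite) set \<Rightarrow> (real^'n \<Rightarrow> real) \<Rightarrow> bool" where
  "L2_on \<Omega> u \<longleftrightarrow> u \<in> borel_measurable (lebesgue_on \<Omega>) \<and>
      set_integrable lebesgue \<Omega> (\<lambda>x. (u x)\<^sup>2)"

definition weak_grad :: "(real^'n::finite) set \<Rightarrow> (real^'n \<Rightarrow> real) \<Rightarrow> (real^'n \<Rightarrow> real^'n) \<Rightarrow> bool" where
  "weak_grad \<Omega> u w \<longleftrightarrow>
     (\<forall>\<psi> i. test_fun \<Omega> \<psi> \<longrightarrow>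
        set_integrable lebesgue \<Omega> (\<lambda>x. u x * pdiff i \<psi> x) \<and>
        set_integrable lebesgue \<Omega> (\<lambda>x. w x $ i * \<psi> x) \<and>
        (LINT x:\<Omega>|lebesgue. u x * pdiff i \<psi> x) = - (LINT x:\<Omega>|lebesgue. w x $ i * \<psi> x))"

definition H1 :: "(real^'n::finite) set \<Rightarrow> (real^'n \<Rightarrow> real) \<Rightarrow> (real^'n \<Rightarrow> real^'n) \<Rightarrow> bool" where
  "H1 \<Omega> u w \<longleftrightarrow> L2_on \<Omega> u \<and> (\<forall>i. L2_on \<Omega> (\<lambda>x. w x $ i)) \<and> weak_grad \<Omega> u w"

definition H10 :: "(real^'n::finite) set \<Rightarrow> (real^'n \<Rightarrow> real) \<Rightarrow> (real^'n \<Rightarrow> real^'n) \<Rightarrow> bool" where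
  "H10 \<Omega> u w \<longleftrightarrow> H1 \<Omega> u w \<and>
     (\<exists>\<psi>. (\<forall>k. test_fun \<Omega> (\<psi> k)) \<and>
        (\<lambda>k. (LINT x:\<Omega>|lebesgue. (u x - \<psi> k x)\<^sup>2) +
             (LINT x:\<Omega>|lebesgue. (norm (w x - grad_cl (\<psi> k) x))\<^sup>2)) \<longlonglongrightarrow> 0)"

(* first Dirichlet eigenvalue of -Laplacian: infimum of the Rayleigh quotient on H^1_0 *)
definition lambda1 :: "(real^'n::finite) set \<Rightarrow> real" where
  "lambda1 \<Omega> = Inf {(LINT x:\<Omega>|lebesgue. (norm (w x))\<^sup>2) / (LINT x:\<Omega>|lebesgue. (u x)\<^sup>2) | u w.
                      H10 \<Omega> u w \<and> (LINT x:\<Omega>|lebesgue. (u x)\<^sup>2) > 0}"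

(* g in H^{1/2}(boundary) (for continuous g): g is the trace of a function in H^1(Omega)
   continuous up to the boundary *)
definition H_half_boundary :: "(real^'n::finite) set \<Rightarrow> (real^'n \<Rightarrow> real) \<Rightarrow> bool" where
  "H_half_boundary \<Omega> g \<longleftrightarrow>
     (\<exists>u w. H1 \<Omega> u w \<and> continuous_on (closure \<Omega>) u \<and> (\<forall>x\<in>frontier \<Omega>. u x = g x))"

definition harmonic_on :: "(real^'n::finite) set \<Rightarrow> (real^'n \<Rightarrow> real) \<Rightarrow> bool" where
  "harmonic_on \<Omega> f \<longleftrightarrow>
     (\<exists>G H. (\<forall>x\<in>\<Omega>. (f has_derivative (\<lambda>h. G x \<bullet> h)) (at x)) \<and>
            (\<forall>x\<in>\<Omega>. (G has_derivative H x) (at x)) \<and>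
            (\<forall>i j. continuous_on \<Omega> (\<lambda>x. H x (axis i 1) $ j)) \<and>
            (\<forall>x\<in>\<Omega>. (\<Sum>i\<in>UNIV. H x (axis i 1) $ i) = 0))"

definition crit_exp :: "'n::finite itself \<Rightarrow> real" where
  "crit_exp TYPE('n) = 2 * real CARD('n) / (real CARD('n) - 2)"

(* v is a solution of (Q_{lambda,mu}): v in H^1_0, v > 0 a.e. in Omega, and weakly
   -Delta v = lam (v + mu phi) + (v + mu phi)^(2^*-1) *)
definition is_solution_Q :: "(real^'n::finite) set \<Rightarrow> (real^'n \<Rightarrow> real) \<Rightarrow> real \<Rightarrow> real \<Rightarrow> (real^'n \<Rightarrow> real) \<Rightarrow> bool" where
  "is_solution_Q \<Omega> \<phi> lam \<mu> v \<longleftrightarrow>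
     (\<exists>w. H10 \<Omega> v w \<and> (AE x in lebesgue. x \<in> \<Omega> \<longrightarrow> v x > 0) \<and>
        (\<forall>\<psi>. test_fun \<Omega> \<psi> \<longrightarrow>
           (let f = (\<lambda>x. lam * (v x + \<mu> * \<phi> x) + (v x + \<mu> * \<phi> x) powr (crit_exp TYPE('n) - 1))
            in set_integrable lebesgue \<Omega> (\<lambda>x. w x \<bullet> grad_cl \<psi> x) \<and>
               set_integrable lebesgue \<Omega> (\<lambda>x. f x * \<psi> x) \<and>
               (LINT x:\<Omega>|lebesgue. w x \<bullet> grad_cl \<psi> x) = (LINT x:\<Omega>|lebesgue. f x * \<psi> x))))"

end

theory Submission
  imports Defs "HOL-Computational_Algebra.Polynomial"
begin

text \<open>
  Pick a boundary point with \<open>g(x\<^sub>0) > 0\<close>; by continuity \<open>\<phi> > c > 0\<close> on a small cube inside \<open>\<Omega>\<close>.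
  A smooth product bump \<open>\<psi> \<ge> 0\<close> on that cube satisfies \<open>\<Delta>\<psi> \<ge> -K\<psi>\<close>. Testing the equation with
  \<open>\<psi>\<close> and moving both derivatives onto \<open>\<psi>\<close> gives \<open>\<integral> f(s) \<psi> + v \<Delta>\<psi> = 0\<close> with \<open>s = v + \<mu>\<phi>\<close>
  and \<open>f(s) = \<lambda> s + s^(2^* - 1)\<close>. Once \<open>\<mu> c\<close> is so large that \<open>s^(2^* - 2) > K\<close>, the integrand is
  at least \<open>K s \<psi> - K v \<psi> \<ge> 0\<close>, and strictly positive on the open cube: a contradiction.
  Only the continuity of \<open>\<phi>\<close> up to the boundary and \<open>g(x\<^sub>0) > 0\<close> are used.
\<close>

fun expinv_poly :: "nat \<Rightarrow> real poly" where
  "expinv_poly 0 = 1"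
| "expinv_poly (Suc k) = [:0,0,1:] * (expinv_poly k - pderiv (expinv_poly k))"

text \<open>The \<open>k\<close>-th derivative of the flat function \<open>u \<mapsto> exp(-1/u)\<close> (extended by \<open>0\<close> for \<open>u \<le> 0\<close>).\<close>
definition expinv_deriv :: "nat \<Rightarrow> real \<Rightarrow> real" where
  "expinv_deriv k u = (if u > 0 then poly (expinv_poly k) (inverse u) * exp (- inverse u) else 0)"

lemma tendsto_poly_times_exp_neg_at_top:
  "((\<lambda>y. poly p y * exp (- y)) \<longlongrightarrow> (0::real)) at_top"
proof -
  have "((\<lambda>y. \<Sum>i\<le>degree p. coeff p i * (y ^ i / exp y)) \<longlongrightarrow> (\<Sum>i\<le>degree p. coeff p i * 0)) at_top"
    by (intro tendsto_sum tendsto_mult tendsto_const tendsto_power_div_exp_0)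
  then show ?thesis
    by (simp add: poly_altdef sum_distrib_right exp_minus divide_inverse mult.assoc)
qed

lemma tendsto_poly_inverse_times_exp_at_right_0:
  "((\<lambda>h. poly p (inverse h) * exp (- inverse h)) \<longlongrightarrow> (0::real)) (at_right 0)"
  using filterlim_compose[OF tendsto_poly_times_exp_neg_at_top filterlim_inverse_at_top_right]
  by simp

lemma has_real_derivative_poly_inverse_times_exp:
  assumes "u > 0"
  shows "((\<lambda>u. poly P (inverse u) * exp (- inverse u)) has_real_derivative
          poly ([:0,0,1:] * (P - pderiv P)) (inverse u) * exp (- inverse u)) (at u)"
proof -
  have "((\<lambda>u. poly P (inverse u) * exp (- inverse u)) has_real_derivative
     (poly (pderiv P) (inverse u) * (- inverse (u^2))) * exp (- inverse u)
       + poly P (inverse u) * (exp (- inverse u) * inverse (u^2))) (at u)"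
    using assms
    by (auto intro!: derivative_eq_intros DERIV_chain2[OF poly_DERIV] simp: power2_eq_square)
  then show ?thesis
    by (simp add: algebra_simps power2_eq_square power_inverse)
qed

lemma expinv_deriv_has_derivative:
  "(expinv_deriv k has_real_derivative expinv_deriv (Suc k) u) (at u)"
proof (cases u "0::real" rule: linorder_cases)
  case greater
  show ?thesis
    by (rule has_field_derivative_transform_within_open[where S="{0<..}"])
       (use has_real_derivative_poly_inverse_times_exp[OF greater, of "expinv_poly k"] greater
         in \<open>auto simp: expinv_deriv_def\<close>)
next
  case less
  show ?thesis
    by (rule has_field_derivative_transform_within_open[where f="\<lambda>_. 0" and S="{..<0}"])
       (use less in \<open>auto simp: expinv_deriv_def\<close>)
next
  case equal
  have "((\<lambda>h. expinv_deriv k h / h) \<longlongrightarrow> 0) (at_right 0)"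
  proof -
    have "((\<lambda>h. poly ([:0,1:] * expinv_poly k) (inverse h) * exp (- inverse h)) \<longlongrightarrow> 0) (at_right 0)"
      by (rule tendsto_poly_inverse_times_exp_at_right_0)
    then show ?thesis
      by (rule tendsto_cong[THEN iffD1, rotated])
         (auto simp: eventually_at_right_field expinv_deriv_def divide_inverse intro!: exI[of _ 1])
  qed
  moreover have "((\<lambda>h. expinv_deriv k h / h) \<longlongrightarrow> 0) (at_left 0)"
    by (rule tendsto_eventually)
       (auto simp: eventually_at_left_field expinv_deriv_def intro!: exI[of _ "-1"])
  ultimately show ?thesis
    unfolding equal DERIV_def using filterlim_split_at by (fastforce simp: expinv_deriv_def)
qed

lemma expinv_deriv_nonpos: "u \<le> 0 \<Longrightarrow> expinv_deriv k u = 0"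
  by (simp add: expinv_deriv_def)

lemma expinv_deriv_0_nonneg: "expinv_deriv 0 u \<ge> 0"
  by (simp add: expinv_deriv_def)

lemma expinv_deriv_0_pos: "u > 0 \<Longrightarrow> expinv_deriv 0 u > 0"
  by (simp add: expinv_deriv_def)

lemma binomial_sum_Suc_Leibniz:
  fixes F G :: "nat \<Rightarrow> real"
  shows "(\<Sum>i = 0..n. real (n choose i) * (F (Suc i) * G (n-i) + F i * G (Suc (n-i)))) =
         (\<Sum>i = 0..Suc n. real (Suc n choose i) * F i * G (Suc n - i))"
proof -
  have Suc_choose: "Suc n choose k = (n choose k) + (if k = 0 then 0 else n choose (k-1))" for k
    by (cases k) simp_all
  have lower: "(\<Sum>i = 0..Suc n. real (n choose i) * F i * G (Suc n - i))
      = (\<Sum>i = 0..n. real (n choose i) * F i * G (Suc (n - i)))"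
    by (simp add: Suc_diff_le)
  have "(\<Sum>i = 0..Suc n. real (if i = 0 then 0 else n choose (i-1)) * F i * G (Suc n - i))
      = (\<Sum>i = Suc 0..Suc n. real (if i = 0 then 0 else n choose (i-1)) * F i * G (Suc n - i))"
    by (subst sum.atLeast_Suc_atMost) simp_all
  also have "\<dots> = (\<Sum>i = 0..n. real (if Suc i = 0 then 0 else n choose (Suc i - 1))
                                   * F (Suc i) * G (Suc n - Suc i))"
    by (rule sum.shift_bounds_cl_Suc_ivl)
  also have "\<dots> = (\<Sum>i = 0..n. real (n choose i) * F (Suc i) * G (n - i))"
    by simp
  finally have upper: "(\<Sum>i = 0..Suc n. real (if i = 0 then 0 else n choose (i-1)) * F i * G (Suc n - i))
      = (\<Sum>i = 0..n. real (n choose i) * F (Suc i) * G (n - i))" .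
  show ?thesis
    unfolding Suc_choose of_nat_add distrib_right sum.distrib lower upper
    by (simp add: sum.distrib[symmetric] algebra_simps)
qed

lemma has_real_derivative_Leibniz:
  fixes F G :: "nat \<Rightarrow> real \<Rightarrow> real"
  assumes "\<And>k x. (F k has_real_derivative F (Suc k) x) (at x)"
    and "\<And>k x. (G k has_real_derivative G (Suc k) x) (at x)"
  shows "((\<lambda>x. \<Sum>i=0..n. real (n choose i) * F i x * G (n-i) x) has_real_derivative
          (\<Sum>i=0..Suc n. real (Suc n choose i) * F i x * G (Suc n - i) x)) (at x)"
proof -
  have "((\<lambda>x. \<Sum>i=0..n. real (n choose i) * F i x * G (n-i) x) has_real_derivative
          (\<Sum>i=0..n. real (n choose i) * (F (Suc i) x * G (n-i) x + F i x * G (Suc (n-i)) x))) (at x)"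
    by (rule derivative_eq_intros refl assms | simp add: algebra_simps)+
  then show ?thesis
    using binomial_sum_Suc_Leibniz[of n "\<lambda>i. F i x" "\<lambda>i. G i x"] by simp
qed

text \<open>\<open>bump_deriv k\<close> is the \<open>k\<close>-th derivative (by Leibniz' rule) of the bump
  \<open>\<beta>(t) = exp(-1/(1+t)) exp(-1/(1-t))\<close>, which is supported in \<open>[-1,1]\<close>.\<close>
definition bump_deriv :: "nat \<Rightarrow> real \<Rightarrow> real" where
  "bump_deriv k t =
     (\<Sum>i=0..k. real (k choose i) * expinv_deriv i (1 + t) * ((-1)^(k-i) * expinv_deriv (k-i) (1 - t)))"

lemma bump_deriv_has_derivative:
  "(bump_deriv k has_real_derivative bump_deriv (Suc k) t) (at t)"
proof -
  have "((\<lambda>t. expinv_deriv j (1 + t)) has_real_derivative expinv_deriv (Suc j) (1 + t) * 1) (at t)"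
    for j t by (rule DERIV_chain2[OF expinv_deriv_has_derivative]) (auto intro!: derivative_eq_intros)
  then have F: "((\<lambda>t. expinv_deriv j (1 + t)) has_real_derivative expinv_deriv (Suc j) (1 + t)) (at t)"
    for j t by simp
  have "((\<lambda>t. expinv_deriv j (1 - t)) has_real_derivative expinv_deriv (Suc j) (1 - t) * (-1)) (at t)"
    for j t by (rule DERIV_chain2[OF expinv_deriv_has_derivative]) (auto intro!: derivative_eq_intros)
  then have G: "((\<lambda>t. (-1)^j * expinv_deriv j (1 - t)) has_real_derivative
             (-1)^(Suc j) * expinv_deriv (Suc j) (1 - t)) (at t)" for j t
    by (auto intro!: derivative_eq_intros)
  show ?thesis
    unfolding bump_deriv_def
    by (rule has_real_derivative_Leibniz[of "\<lambda>j t. expinv_deriv j (1 + t)"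
          "\<lambda>j t. (-1)^j * expinv_deriv j (1 - t)", OF F G])
qed

lemma bump_deriv_eq_0: "\<bar>t\<bar> \<ge> 1 \<Longrightarrow> bump_deriv k t = 0"
  unfolding bump_deriv_def
  by (intro sum.neutral) (cases "t \<ge> 1"; auto simp: expinv_deriv_nonpos)

lemma bump_deriv_0: "bump_deriv 0 t = expinv_deriv 0 (1 + t) * expinv_deriv 0 (1 - t)"
  by (simp add: bump_deriv_def)

lemma bump_deriv_0_nonneg: "bump_deriv 0 t \<ge> 0"
  by (simp add: bump_deriv_0 expinv_deriv_0_nonneg)

lemma bump_deriv_0_pos: "\<bar>t\<bar> < 1 \<Longrightarrow> bump_deriv 0 t > 0"
  by (simp add: bump_deriv_0 expinv_deriv_0_pos)

lemma quartic_bound_200: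
  fixes a b :: real
  assumes "0 \<le> a" "a \<le> 1" "0 \<le> b"
  shows "2*a^3 - a^4 + 2*a^2*b^2 + 2*b^3 - b^4 \<le> 200"
proof -
  have "a^3 \<le> 1" using assms by (simp add: power_le_one)
  moreover have "a^2*b^2 \<le> b^2" using assms by (simp add: mult_left_le_one_le power_le_one)
  moreover have "2*b^2 + 2*b^3 - b^4 \<le> 198"
  proof (cases "b \<le> 4")
    case True
    then have "b^2 \<le> 16" "b^3 \<le> 64" using assms by (auto intro: order.trans[OF power_mono[of b 4]])
    moreover have "b^4 \<ge> 0" using assms by simp
    ultimately show ?thesis by (simp add: power_numeral_reduce)
  next
    case False
    have "4 * b^3 \<le> b * b^3" "4 * b^2 \<le> b * b^2" using False assms by (intro mult_right_mono; simp)+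
    then have "4 * b^3 \<le> b^4" "4 * b^2 \<le> b^3" by (simp_all add: power_numeral_reduce)
    moreover have "b^2 \<ge> 0" by simp
    ultimately show ?thesis by linarith
  qed
  moreover have "a^4 \<ge> 0" using assms by simp
  ultimately show ?thesis by linarith
qed

text \<open>With \<open>y\<^sub>1 = 1/(1+t)\<close>, \<open>y\<^sub>2 = 1/(1-t)\<close>, the ratio \<open>-\<beta>''/\<beta>\<close> is a quartic in \<open>y\<^sub>1, y\<^sub>2\<close> whose
  negative leading terms \<open>-y\<^sub>i\<^sup>4\<close> keep it bounded; the smaller of \<open>y\<^sub>1, y\<^sub>2\<close> is at most \<open>1\<close>.\<close>
lemma bump_deriv_2_lower_bound: "- bump_deriv 2 t \<le> 200 * bump_deriv 0 t"
proof (cases "\<bar>t\<bar> < 1")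
  case False
  then show ?thesis by (simp add: bump_deriv_eq_0)
next
  case True
  define y1 where "y1 = inverse (1 + t)"
  define y2 where "y2 = inverse (1 - t)"
  define e where "e = exp (- y1) * exp (- y2)"
  have pos: "1 + t > 0" "1 - t > 0" using True by auto
  have D2: "bump_deriv 2 t = e * (y2^2 * (y2^2 - 2*y2) - 2 * y1^2 * y2^2 + y1^2*(y1^2 - 2*y1))"
    using pos unfolding bump_deriv_def expinv_deriv_def e_def y1_def y2_def
    by (simp add: numeral_2_eq_2 algebra_simps power2_eq_square pderiv_pCons)
  have D0: "bump_deriv 0 t = e"
    using pos by (simp add: bump_deriv_0 expinv_deriv_def e_def y1_def y2_def)
  have "2*y2^3 - y2^4 + 2*y2^2*y1^2 + 2*y1^3 - y1^4 \<le> 200"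
  proof (cases "t \<ge> 0")
    case True
    then have "0 \<le> y1" "y1 \<le> 1" "0 \<le> y2" using pos by (auto simp: y1_def y2_def inverse_le_1_iff)
    from quartic_bound_200[OF this] show ?thesis by (simp add: algebra_simps)
  next
    case False
    then have "0 \<le> y2" "y2 \<le> 1" "0 \<le> y1" using pos by (auto simp: y1_def y2_def inverse_le_1_iff)
    from quartic_bound_200[OF this] show ?thesis by (simp add: algebra_simps)
  qed
  then have "e * (2*y2^3 - y2^4 + 2*y2^2*y1^2 + 2*y1^3 - y1^4) \<le> e * 200"
    by (intro mult_left_mono) (auto simp: e_def)
  moreover have "- bump_deriv 2 t = e * (2*y2^3 - y2^4 + 2*y2^2*y1^2 + 2*y1^3 - y1^4)"
    unfolding D2 by (simp add: algebra_simps power2_eq_square power3_eq_cube power4_eq_xxxx)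
  ultimately show ?thesis by (simp add: D0)
qed

definition scaled_bump_deriv :: "real \<Rightarrow> real \<Rightarrow> nat \<Rightarrow> real \<Rightarrow> real" where
  "scaled_bump_deriv a r k t = bump_deriv k ((t - a) / r) / r ^ k"

lemma scaled_bump_deriv_has_derivative:
  assumes "r \<noteq> 0"
  shows "(scaled_bump_deriv a r k has_real_derivative scaled_bump_deriv a r (Suc k) t) (at t)"
proof -
  have "((\<lambda>t. bump_deriv k ((t - a) / r)) has_real_derivative bump_deriv (Suc k) ((t - a) / r) * (1 / r)) (at t)"
    using assms by (intro DERIV_chain2[OF bump_deriv_has_derivative]) (auto intro!: derivative_eq_intros)
  then have "((\<lambda>t. bump_deriv k ((t - a) / r) / r ^ k) has_real_derivative
               bump_deriv (Suc k) ((t - a) / r) * (1 / r) / r ^ k) (at t)"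
    by (rule DERIV_cdivide)
  then show ?thesis unfolding scaled_bump_deriv_def by simp
qed

lemma continuous_on_scaled_bump_deriv: "r \<noteq> 0 \<Longrightarrow> continuous_on UNIV (scaled_bump_deriv a r k)"
  by (meson DERIV_isCont scaled_bump_deriv_has_derivative continuous_at_imp_continuous_on)

text \<open>The partial derivative \<open>\<partial>\<^sup>k\<close> (multi-index \<open>k\<close>) of the bump \<open>x \<mapsto> \<Prod>\<^sub>i \<beta>((x\<^sub>i - y\<^sub>i)/r)\<close>,
  which is supported in the cube of centre \<open>y\<close> and half-side \<open>r\<close>.\<close>
definition cube_bump :: "real^'n::finite \<Rightarrow> real \<Rightarrow> ('n \<Rightarrow> nat) \<Rightarrow> real^'n \<Rightarrow> real" where
  "cube_bump y r k x = (\<Prod>i\<in>UNIV. scaled_bump_deriv (y$i) r (k i) (x$i))"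

lemma cube_bump_split:
  "cube_bump y r k x = scaled_bump_deriv (y$i) r (k i) (x$i) * (\<Prod>j\<in>UNIV-{i}. scaled_bump_deriv (y$j) r (k j) (x$j))"
  unfolding cube_bump_def by (simp add: prod.remove)

lemma cube_bump_has_partial_derivative:
  assumes "r \<noteq> 0"
  shows "((\<lambda>t. cube_bump y r k (x + t *\<^sub>R axis i 1)) has_real_derivative
           cube_bump y r (k(i := Suc (k i))) x) (at 0)"
proof -
  define R where "R = (\<Prod>j\<in>UNIV-{i}. scaled_bump_deriv (y$j) r (k j) (x$j))"
  have line: "cube_bump y r k (x + t *\<^sub>R axis i 1) = scaled_bump_deriv (y$i) r (k i) (x$i + t) * R" for t
  proof -
    have "(\<Prod>j\<in>UNIV-{i}. scaled_bump_deriv (y$j) r (k j) ((x + t *\<^sub>R axis i 1)$j)) = R"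
      unfolding R_def by (intro prod.cong) (auto simp: axis_def)
    then show ?thesis by (subst cube_bump_split[of _ _ _ _ i]) (simp add: axis_def)
  qed
  have "(\<Prod>j\<in>UNIV-{i}. scaled_bump_deriv (y$j) r ((k(i := Suc (k i))) j) (x$j)) = R"
    unfolding R_def by (intro prod.cong) auto
  then have deriv: "cube_bump y r (k(i := Suc (k i))) x = scaled_bump_deriv (y$i) r (Suc (k i)) (x$i) * R"
    by (subst cube_bump_split[of _ _ _ _ i]) simp
  have "((\<lambda>t. scaled_bump_deriv (y$i) r (k i) (x$i + t) * R) has_real_derivative
          scaled_bump_deriv (y$i) r (Suc (k i)) (x$i + 0) * 1 * R) (at 0)"
    by (intro DERIV_cmult_right DERIV_chain2[OF scaled_bump_deriv_has_derivative[OF assms]])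
       (auto intro!: derivative_eq_intros)
  then show ?thesis unfolding line deriv by simp
qed

lemma pdiff_cube_bump: "r \<noteq> 0 \<Longrightarrow> pdiff i (cube_bump y r k) = cube_bump y r (k(i := Suc (k i)))"
  unfolding pdiff_def by (rule ext) (rule DERIV_imp_deriv[OF cube_bump_has_partial_derivative])

lemma smooth_on_cube_bump:
  assumes "r \<noteq> 0"
  shows "smooth_on UNIV (cube_bump y r k)"
proof -
  have iterated: "\<exists>k'. foldr pdiff is (cube_bump y r k) = cube_bump y r k'" for "is"
    by (induction "is") (auto simp: pdiff_cube_bump[OF assms])
  have "continuous_on UNIV (cube_bump y r k')" for k'
    unfolding cube_bump_def
    by (intro continuous_on_prod continuous_on_compose2[OF continuous_on_scaled_bump_deriv[OF assms]]
          continuous_intros) auto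
  moreover have "(\<lambda>t. cube_bump y r k' (x + t *\<^sub>R axis i 1)) field_differentiable at 0" for k' x i
    unfolding field_differentiable_def using cube_bump_has_partial_derivative[OF assms] by blast
  ultimately show ?thesis
    unfolding smooth_on_def by (metis iterated)
qed

lemma cube_bump_nonzero_imp:
  assumes "r > 0" "cube_bump y r k x \<noteq> 0"
  shows "\<bar>x$i - y$i\<bar> < r"
proof (rule ccontr)
  assume "\<not> ?thesis"
  then have "\<bar>(x$i - y$i) / r\<bar> \<ge> 1" using assms by (simp add: abs_div)
  then have "scaled_bump_deriv (y$i) r (k i) (x$i) = 0" by (simp add: scaled_bump_deriv_def bump_deriv_eq_0)
  then show False using assms(2) cube_bump_split[of y r k x i] by simp
qed

lemma cube_bump_0_pos:
  assumes "r > 0" "\<forall>i. \<bar>x$i - y$i\<bar> < r"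
  shows "cube_bump y r (\<lambda>_. 0) x > 0"
  unfolding cube_bump_def scaled_bump_deriv_def using assms
  by (intro prod_pos) (auto intro!: bump_deriv_0_pos simp: abs_div)

lemma cube_bump_0_nonneg: "r > 0 \<Longrightarrow> cube_bump y r (\<lambda>_. 0) x \<ge> 0"
  unfolding cube_bump_def scaled_bump_deriv_def by (intro prod_nonneg) (auto intro!: bump_deriv_0_nonneg)

lemma cube_bump_second_partial_lower_bound:
  assumes "r > 0"
  shows "- cube_bump y r ((\<lambda>_. 0)(i := 2)) x \<le> (200 / r^2) * cube_bump y r (\<lambda>_. 0) x"
proof -
  define R where "R = (\<Prod>j\<in>UNIV-{i}. scaled_bump_deriv (y$j) r 0 (x$j))"
  have R: "R \<ge> 0"
    unfolding R_def scaled_bump_deriv_def by (intro prod_nonneg) (auto intro!: bump_deriv_0_nonneg)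
  have "(\<Prod>j\<in>UNIV-{i}. scaled_bump_deriv (y$j) r (((\<lambda>_. 0)(i := 2)) j) (x$j)) = R"
    unfolding R_def by (intro prod.cong) auto
  then have second: "cube_bump y r ((\<lambda>_. 0)(i := 2)) x = scaled_bump_deriv (y$i) r 2 (x$i) * R"
    by (subst cube_bump_split[of _ _ _ _ i]) simp
  have zeroth: "cube_bump y r (\<lambda>_. 0) x = scaled_bump_deriv (y$i) r 0 (x$i) * R"
    unfolding R_def by (subst cube_bump_split[of _ _ _ _ i]) simp
  have "- scaled_bump_deriv (y$i) r 2 (x$i) \<le> (200 / r^2) * scaled_bump_deriv (y$i) r 0 (x$i)"
    using bump_deriv_2_lower_bound[of "(x$i - y$i)/r"] assms unfolding scaled_bump_deriv_def
    by (simp add: field_simps)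
  then show ?thesis
    unfolding second zeroth using mult_right_mono[OF _ R] by (metis mult.assoc mult_minus_left)
qed

definition laplacian :: "(real^'n::finite \<Rightarrow> real) \<Rightarrow> real^'n \<Rightarrow> real" where
  "laplacian f x = (\<Sum>i\<in>UNIV. pdiff i (pdiff i f) x)"

lemma laplacian_cube_bump_lower_bound:
  fixes y :: "real^'n::finite"
  assumes "r > 0"
  shows "laplacian (cube_bump y r (\<lambda>_. 0)) x \<ge> - (CARD('n) * 200 / r^2) * cube_bump y r (\<lambda>_. 0) x"
proof -
  have "laplacian (cube_bump y r (\<lambda>_. 0)) x = (\<Sum>i\<in>UNIV. cube_bump y r ((\<lambda>_. 0)(i := 2)) x)"
    unfolding laplacian_def using assms by (simp add: pdiff_cube_bump numeral_2_eq_2)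
  also have "\<dots> \<ge> (\<Sum>i\<in>(UNIV::'n set). - (200 / r^2) * cube_bump y r (\<lambda>_. 0) x)"
    using cube_bump_second_partial_lower_bound[OF assms] by (intro sum_mono) (simp add: minus_le_iff)
  finally show ?thesis by simp
qed

lemma mem_box_cube_iff:
  fixes y x :: "real^'n::finite"
  shows "x \<in> box (\<chi> i. y$i - r) (\<chi> i. y$i + r) \<longleftrightarrow> (\<forall>i. \<bar>x$i - y$i\<bar> < r)"
  by (simp add: mem_box_cart abs_diff_less_iff)

lemma mem_cbox_cube_iff:
  fixes y x :: "real^'n::finite"
  shows "x \<in> cbox (\<chi> i. y$i - r) (\<chi> i. y$i + r) \<longleftrightarrow> (\<forall>i. \<bar>x$i - y$i\<bar> \<le> r)"
  by (simp add: mem_box_cart abs_diff_le_iff)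

lemma test_fun_cube_bump:
  fixes y :: "real^'n::finite"
  assumes "r > 0" "cbox (\<chi> i. y$i - r) (\<chi> i. y$i + r) \<subseteq> \<Omega>"
  shows "test_fun \<Omega> (cube_bump y r k)"
proof -
  have supp: "{x. cube_bump y r k x \<noteq> 0} \<subseteq> cbox (\<chi> i. y$i - r) (\<chi> i. y$i + r)"
    by (force simp: mem_cbox_cube_iff dest: cube_bump_nonzero_imp[OF assms(1)] intro: less_imp_le)
  then have "closure {x. cube_bump y r k x \<noteq> 0} \<subseteq> cbox (\<chi> i. y$i - r) (\<chi> i. y$i + r)"
    by (intro closure_minimal) auto
  moreover have "bounded {x. cube_bump y r k x \<noteq> 0}"
    using supp bounded_cbox bounded_subset by blast
  ultimately show ?thesis
    unfolding test_fun_def using smooth_on_cube_bump[of r y k] assms by auto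
qed

lemma emeasure_box_cube_pos:
  fixes y :: "real^'n::finite"
  assumes "r > 0"
  shows "emeasure lborel (box (\<chi> i. y$i - r) (\<chi> i. y$i + r)) \<noteq> 0"
proof -
  have le: "\<And>b. b \<in> Basis \<Longrightarrow> (\<chi> i. y$i - r) \<bullet> b \<le> (\<chi> i. y$i + r) \<bullet> b"
    and pos: "\<And>b. b \<in> Basis \<Longrightarrow> ((\<chi> i. y$i + r) - (\<chi> i. y$i - r)) \<bullet> b > 0"
    using assms by (auto simp: Basis_vec_def inner_axis)
  have "(\<Prod>b\<in>Basis. ((\<chi> i. y$i + r) - (\<chi> i. y$i - r)) \<bullet> b) > 0"
    using pos by (intro prod_pos) auto
  then show ?thesis
    using emeasure_lborel_box[OF le] pos by (simp add: less_imp_neq[symmetric])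
qed

lemma set_integral_sum:
  fixes f :: "'i \<Rightarrow> 'a \<Rightarrow> real"
  assumes "\<And>i. i \<in> I \<Longrightarrow> set_integrable M A (f i)"
  shows "set_integrable M A (\<lambda>x. \<Sum>i\<in>I. f i x)"
    and "(LINT x:A|M. (\<Sum>i\<in>I. f i x)) = (\<Sum>i\<in>I. LINT x:A|M. f i x)"
  using assms unfolding set_integrable_def set_lebesgue_integral_def scaleR_sum_right
  by (auto intro!: Bochner_Integration.integral_sum)

lemma set_integral_pos_if_pos_on_subset:
  fixes G :: "'a \<Rightarrow> real"
  assumes "set_integrable M A G"
    and "AE x in M. x \<in> A \<longrightarrow> 0 \<le> G x" and "AE x in M. x \<in> B \<longrightarrow> 0 < G x"
    and "B \<subseteq> A" and "B \<in> sets M" and "emeasure M B \<noteq> 0"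
  shows "(LINT x:A|M. G x) > 0"
proof -
  have int: "integrable M (\<lambda>x. indicator A x *\<^sub>R G x)"
    using assms(1) unfolding set_integrable_def .
  have nonneg: "AE x in M. 0 \<le> indicator A x *\<^sub>R G x"
    using assms(2) by eventually_elim (simp add: indicator_def)
  have "(LINT x:A|M. G x) \<noteq> 0"
  proof
    assume "(LINT x:A|M. G x) = 0"
    then have "AE x in M. indicator A x *\<^sub>R G x = 0"
      using integral_nonneg_eq_0_iff_AE[OF int nonneg] unfolding set_lebesgue_integral_def by simp
    then have "AE x in M. x \<notin> B"
      using assms(3) by eventually_elim (use assms(4) in \<open>auto simp: indicator_def\<close>)
    moreover have "{x \<in> space M. \<not> x \<notin> B} = B"
      using sets.sets_into_space[OF assms(5)] by auto
    ultimately show False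
      using AE_iff_measurable[OF assms(5), of "\<lambda>x. x \<notin> B"] assms(6) by simp
  qed
  moreover have "(LINT x:A|M. G x) \<ge> 0"
    unfolding set_lebesgue_integral_def using nonneg by (rule integral_nonneg_AE)
  ultimately show ?thesis by simp
qed

lemma weak_grad_set_integral_laplacian:
  assumes "weak_grad \<Omega> v w" and "\<And>i. test_fun \<Omega> (pdiff i \<psi>)"
  shows "set_integrable lebesgue \<Omega> (\<lambda>x. v x * laplacian \<psi> x)"
    and "set_integrable lebesgue \<Omega> (\<lambda>x. w x \<bullet> grad_cl \<psi> x)"
    and "(LINT x:\<Omega>|lebesgue. v x * laplacian \<psi> x) = - (LINT x:\<Omega>|lebesgue. w x \<bullet> grad_cl \<psi> x)"
proof -
  have parts: "set_integrable lebesgue \<Omega> (\<lambda>x. v x * pdiff i (pdiff i \<psi>) x)"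
    "set_integrable lebesgue \<Omega> (\<lambda>x. w x $ i * pdiff i \<psi> x)"
    "(LINT x:\<Omega>|lebesgue. v x * pdiff i (pdiff i \<psi>) x) = - (LINT x:\<Omega>|lebesgue. w x $ i * pdiff i \<psi> x)"
    for i using assms unfolding weak_grad_def by blast+
  have lap: "v x * laplacian \<psi> x = (\<Sum>i\<in>UNIV. v x * pdiff i (pdiff i \<psi>) x)" for x
    unfolding laplacian_def by (simp add: sum_distrib_left)
  have grad: "w x \<bullet> grad_cl \<psi> x = (\<Sum>i\<in>UNIV. w x $ i * pdiff i \<psi> x)" for x
    unfolding grad_cl_def inner_vec_def by simp
  show "set_integrable lebesgue \<Omega> (\<lambda>x. v x * laplacian \<psi> x)"
    "set_integrable lebesgue \<Omega> (\<lambda>x. w x \<bullet> grad_cl \<psi> x)"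
    unfolding lap grad using parts by (auto intro: set_integral_sum)
  show "(LINT x:\<Omega>|lebesgue. v x * laplacian \<psi> x) = - (LINT x:\<Omega>|lebesgue. w x \<bullet> grad_cl \<psi> x)"
    unfolding lap grad using parts by (simp add: set_integral_sum sum_negf)
qed

lemma is_solution_Q_tested_with_laplacian:
  fixes \<Omega> :: "(real^'n::finite) set"
  assumes "is_solution_Q \<Omega> \<phi> lam \<mu> v" and "test_fun \<Omega> \<psi>" and "\<And>i. test_fun \<Omega> (pdiff i \<psi>)"
  defines "f \<equiv> \<lambda>x. lam * (v x + \<mu> * \<phi> x) + (v x + \<mu> * \<phi> x) powr (crit_exp TYPE('n) - 1)"
  shows "set_integrable lebesgue \<Omega> (\<lambda>x. f x * \<psi> x + v x * laplacian \<psi> x)"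
    and "(LINT x:\<Omega>|lebesgue. f x * \<psi> x + v x * laplacian \<psi> x) = 0"
proof -
  obtain w where "weak_grad \<Omega> v w"
    and eq: "set_integrable lebesgue \<Omega> (\<lambda>x. f x * \<psi> x)"
      "(LINT x:\<Omega>|lebesgue. w x \<bullet> grad_cl \<psi> x) = (LINT x:\<Omega>|lebesgue. f x * \<psi> x)"
    using assms(1,2) unfolding is_solution_Q_def H10_def H1_def f_def Let_def by blast
  note lap = weak_grad_set_integral_laplacian[OF this(1) assms(3)]
  show "set_integrable lebesgue \<Omega> (\<lambda>x. f x * \<psi> x + v x * laplacian \<psi> x)"
    using eq(1) lap(1) by (rule set_integral_add)
  show "(LINT x:\<Omega>|lebesgue. f x * \<psi> x + v x * laplacian \<psi> x) = 0"
    using eq lap by (simp add: set_integral_add)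
qed

lemma crit_exp_gt_2:
  assumes "CARD('n::finite) \<ge> 3"
  shows "crit_exp TYPE('n) > 2"
proof -
  have "real CARD('n) \<ge> 3" using assms by linarith
  then show ?thesis unfolding crit_exp_def by (simp add: field_simps)
qed

lemma powr_gt_if_powr_inverse_lt:
  fixes m p s :: real
  assumes "0 < m" "0 < p" "m powr (1/p) < s"
  shows "m < s powr p"
proof -
  have "(m powr (1/p)) powr p < s powr p"
    using assms by (intro powr_less_mono2) auto
  then show ?thesis using assms by (simp add: powr_powr)
qed

text \<open>\<open>s\<^sup>q \<ge> K s \<ge> K v\<close> once \<open>\<mu>\<phi>\<close> is large, which beats \<open>v \<Delta>\<psi> \<ge> -K v \<psi>\<close>.\<close>
lemma tested_integrand_nonneg:
  fixes lam q K c \<mu> v ph ps Lap :: real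
  assumes "0 \<le> lam" "1 < q" "0 \<le> K" "0 < c" "(max 1 K) powr (1/(q-1)) < \<mu> * c"
    and "0 < v" "0 \<le> ps" "- K * ps \<le> Lap" "0 < ps \<Longrightarrow> c < ph"
  defines "s \<equiv> v + \<mu> * ph"
  shows "0 \<le> (lam * s + s powr q) * ps + v * Lap"
    and "0 < ps \<Longrightarrow> 0 < (lam * s + s powr q) * ps + v * Lap"
proof -
  show pos: "0 < (lam * s + s powr q) * ps + v * Lap" if ps: "0 < ps"
  proof -
    have "0 \<le> (max 1 K) powr (1/(q-1))" by simp
    then have "0 < \<mu>" using assms(4,5) by (smt (verit) mult_nonpos_nonneg)
    then have "\<mu> * c \<le> \<mu> * ph" using assms(9)[OF ps] by simp
    then have root_lt: "(max 1 K) powr (1/(q-1)) < s"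
      using assms(5,6) unfolding s_def by linarith
    have "v \<le> s"
      using \<open>0 < \<mu>\<close> assms(4) assms(9)[OF ps] unfolding s_def by simp
    have "K < s powr (q-1)"
      using root_lt powr_gt_if_powr_inverse_lt[of "max 1 K" "q-1" s] assms(2) by fastforce
    have "0 < s" using \<open>v \<le> s\<close> assms(6) by simp
    have "s powr q = s powr (q-1) * s"
      using \<open>0 < s\<close> powr_add[of s "q-1" 1] by simp
    then have "K * s < s powr q"
      using \<open>K < s powr (q-1)\<close> \<open>0 < s\<close> by simp
    then have "K * v * ps < s powr q * ps"
      using \<open>v \<le> s\<close> assms(3) ps mult_left_mono[OF \<open>v \<le> s\<close> assms(3)] by (smt (verit) mult_strict_right_mono)
    moreover have "- (K * v * ps) \<le> v * Lap"
      using mult_left_mono[OF assms(8), of v] assms(6) by (simp add: algebra_simps)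
    moreover have "0 \<le> lam * s * ps" using assms(1) \<open>0 < s\<close> ps by simp
    ultimately show ?thesis by (simp add: algebra_simps)
  qed
  show "0 \<le> (lam * s + s powr q) * ps + v * Lap"
  proof (cases "ps = 0")
    case True
    then show ?thesis using assms(6,8) by simp
  next
    case False
    then show ?thesis using pos assms(7) by fastforce
  qed
qed

lemma cube_where_continuous_gt:
  fixes \<Omega> :: "(real^'n::finite) set" and \<phi> :: "real^'n \<Rightarrow> real"
  assumes "open \<Omega>" and "continuous_on (closure \<Omega>) \<phi>" and "x0 \<in> closure \<Omega>" and "c < \<phi> x0"
  obtains y r where "0 < r" and "cbox (\<chi> i. y$i - r) (\<chi> i. y$i + r) \<subseteq> \<Omega>"
    and "\<And>x. x \<in> cbox (\<chi> i. y$i - r) (\<chi> i. y$i + r) \<Longrightarrow> c < \<phi> x"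
proof -
  obtain d where "d > 0" and d: "\<forall>x\<in>closure \<Omega>. dist x x0 < d \<longrightarrow> dist (\<phi> x) (\<phi> x0) < \<phi> x0 - c"
    using assms(2,3,4) unfolding continuous_on_iff by (meson diff_gt_0_iff_gt)
  obtain y where "y \<in> \<Omega>" "dist y x0 < d/2"
    using assms(3) \<open>d > 0\<close> unfolding closure_approachable by (meson half_gt_zero)
  obtain e where "e > 0" "ball y e \<subseteq> \<Omega>"
    using assms(1) \<open>y \<in> \<Omega>\<close> open_contains_ball by blast
  define r where "r = min e (d/2) / (2 * CARD('n))"
  have "r > 0" using \<open>e > 0\<close> \<open>d > 0\<close> by (simp add: r_def)
  have near: "x \<in> \<Omega> \<and> c < \<phi> x" if "x \<in> cbox (\<chi> i. y$i - r) (\<chi> i. y$i + r)" for x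
  proof -
    have "norm (x - y) \<le> (\<Sum>i\<in>UNIV. \<bar>(x - y)$i\<bar>)" by (rule norm_le_l1_cart)
    also have "\<dots> \<le> CARD('n) * r"
      using that by (intro sum_bounded_above) (auto simp: mem_cbox_cube_iff)
    also have "\<dots> = min e (d/2) / 2" by (simp add: r_def)
    finally have xy: "norm (x - y) \<le> min e (d/2) / 2" .
    then have "x \<in> \<Omega>"
      using \<open>e > 0\<close> \<open>ball y e \<subseteq> \<Omega>\<close> by (auto simp: dist_norm norm_minus_commute)
    moreover have "dist x x0 < d"
      using dist_triangle[of x x0 y] xy \<open>dist y x0 < d/2\<close> \<open>d > 0\<close> by (simp add: dist_norm)
    ultimately show ?thesis
      using d closure_subset by (fastforce simp: dist_real_def)
  qed
  show ?thesis using that[OF \<open>r > 0\<close>] near by blast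
qed

lemma cube_bump_tested_integrand_nonneg:
  fixes y x :: "real^'n::finite" and \<phi> :: "real^'n \<Rightarrow> real" and r v \<mu> :: real
  defines "\<psi> \<equiv> cube_bump y r (\<lambda>_. 0)" and "K \<equiv> CARD('n) * 200 / r^2"
  defines "s \<equiv> v + \<mu> * \<phi> x"
  assumes "0 \<le> lam" "1 < q" "0 < r" "0 < c" "(max 1 K) powr (1/(q-1)) < \<mu> * c" "0 < v"
    and "\<And>x. x \<in> cbox (\<chi> i. y$i - r) (\<chi> i. y$i + r) \<Longrightarrow> c < \<phi> x"
  shows "0 \<le> (lam * s + s powr q) * \<psi> x + v * laplacian \<psi> x"
    and "x \<in> box (\<chi> i. y$i - r) (\<chi> i. y$i + r) \<Longrightarrow> 0 < (lam * s + s powr q) * \<psi> x + v * laplacian \<psi> x"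
proof -
  have "0 < \<psi> x \<Longrightarrow> c < \<phi> x"
    using assms(10) cube_bump_nonzero_imp[OF \<open>0 < r\<close>, of y "\<lambda>_. 0" x]
    by (force simp: \<psi>_def mem_cbox_cube_iff less_imp_le)
  note integrand = tested_integrand_nonneg[OF assms(4,5) _ assms(7,8,9) _ _ this]
  have bounds: "0 \<le> K" "0 \<le> \<psi> x" "- K * \<psi> x \<le> laplacian \<psi> x"
    using cube_bump_0_nonneg laplacian_cube_bump_lower_bound \<open>0 < r\<close>
    by (auto simp: \<psi>_def K_def)
  show "0 \<le> (lam * s + s powr q) * \<psi> x + v * laplacian \<psi> x"
    using integrand(1)[OF bounds] unfolding s_def .
  show "0 < (lam * s + s powr q) * \<psi> x + v * laplacian \<psi> x"
    if "x \<in> box (\<chi> i. y$i - r) (\<chi> i. y$i + r)"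
  proof -
    have "0 < \<psi> x"
      using cube_bump_0_pos[OF \<open>0 < r\<close>, of x y] that by (simp add: \<psi>_def mem_box_cube_iff)
    then show ?thesis
      using integrand(2)[OF bounds] unfolding s_def by simp
  qed
qed

lemma is_solution_Q_bounded_if_gt_on_cube:
  fixes \<Omega> :: "(real^'n::finite) set" and y :: "real^'n"
  assumes "CARD('n) \<ge> 3" "0 \<le> lam" "0 < r" "0 < c"
    and cube: "cbox (\<chi> i. y$i - r) (\<chi> i. y$i + r) \<subseteq> \<Omega>"
    and \<phi>_gt: "\<And>x. x \<in> cbox (\<chi> i. y$i - r) (\<chi> i. y$i + r) \<Longrightarrow> c < \<phi> x"
    and sol: "is_solution_Q \<Omega> \<phi> lam \<mu> v"
  shows "\<mu> \<le> (max 1 (CARD('n) * 200 / r^2)) powr (1 / (crit_exp TYPE('n) - 2)) / c"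
proof (rule ccontr)
  define q where "q = crit_exp TYPE('n) - 1"
  define \<psi> where "\<psi> = cube_bump y r (\<lambda>_. 0)"
  define B where "B = box (\<chi> i. y$i - r) (\<chi> i. y$i + r)"
  define G where "G = (\<lambda>x. (lam * (v x + \<mu> * \<phi> x) + (v x + \<mu> * \<phi> x) powr q) * \<psi> x
                          + v x * laplacian \<psi> x)"
  assume "\<not> ?thesis"
  then have large: "(max 1 (CARD('n) * 200 / r^2)) powr (1/(q-1)) < \<mu> * c"
    using \<open>0 < c\<close> by (simp add: field_simps q_def)
  have "1 < q" using crit_exp_gt_2[OF assms(1)] by (simp add: q_def)
  have G: "0 \<le> G x" "x \<in> B \<Longrightarrow> 0 < G x" if "0 < v x" for x
    using cube_bump_tested_integrand_nonneg[where y=y and x=x and \<phi>=\<phi> and v="v x" and \<mu>=\<mu>,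
        OF assms(2) \<open>1 < q\<close> assms(3,4) large that \<phi>_gt]
    unfolding G_def \<psi>_def B_def by simp_all
  have test: "test_fun \<Omega> \<psi>" "\<And>i. test_fun \<Omega> (pdiff i \<psi>)"
    using test_fun_cube_bump[OF \<open>0 < r\<close> cube] \<open>0 < r\<close> by (simp_all add: \<psi>_def pdiff_cube_bump)
  have v_pos: "AE x in lebesgue. x \<in> \<Omega> \<longrightarrow> 0 < v x"
    using sol by (auto simp: is_solution_Q_def)
  have B: "B \<subseteq> \<Omega>" "B \<in> sets lebesgue" "emeasure lebesgue B \<noteq> 0"
    using cube box_subset_cbox emeasure_box_cube_pos[OF \<open>0 < r\<close>, of y] by (auto simp: B_def)
  have "0 < (LINT x:\<Omega>|lebesgue. G x)"
  proof (rule set_integral_pos_if_pos_on_subset[OF _ _ _ B])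
    show "set_integrable lebesgue \<Omega> G"
      using is_solution_Q_tested_with_laplacian(1)[OF sol test] by (simp add: G_def q_def)
    show "AE x in lebesgue. x \<in> \<Omega> \<longrightarrow> 0 \<le> G x"
      using v_pos by eventually_elim (simp add: G)
    show "AE x in lebesgue. x \<in> B \<longrightarrow> 0 < G x"
      using v_pos by eventually_elim (use B(1) G in auto)
  qed
  then show False
    using is_solution_Q_tested_with_laplacian(2)[OF sol test] by (simp add: G_def q_def)
qed

theorem lemma2p1:
  fixes \<Omega> :: "(real^'n::finite) set" and g \<phi> :: "real^'n \<Rightarrow> real" and lam :: real
  assumes "CARD('n) \<ge> 3"
    and "open \<Omega>" and "connected \<Omega>" and "bounded \<Omega>" and "smooth_boundary \<Omega>"
    and "continuous_on (frontier \<Omega>) g" and "H_half_boundary \<Omega> g"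
    and "\<forall>x\<in>frontier \<Omega>. g x \<ge> 0" and "\<exists>x\<in>frontier \<Omega>. g x \<noteq> 0"
    and "harmonic_on \<Omega> \<phi>" and "continuous_on (closure \<Omega>) \<phi>"
    and "\<forall>x\<in>frontier \<Omega>. \<phi> x = g x"
    and "0 < lam" and "lam < lambda1 \<Omega>"
  shows "bdd_above {\<mu>::real. \<mu> > 0 \<and> (\<exists>v. is_solution_Q \<Omega> \<phi> lam \<mu> v)}"
proof -
  obtain x0 where "x0 \<in> frontier \<Omega>" "g x0 \<noteq> 0" using assms(9) by blast
  then have "0 < \<phi> x0 / 2" "\<phi> x0 / 2 < \<phi> x0" "x0 \<in> closure \<Omega>"
    using assms(8,12) by (force simp: frontier_def)+
  then obtain y r where "0 < r" and cube: "cbox (\<chi> i. y$i - r) (\<chi> i. y$i + r) \<subseteq> \<Omega>"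
    and "\<And>x. x \<in> cbox (\<chi> i. y$i - r) (\<chi> i. y$i + r) \<Longrightarrow> \<phi> x0 / 2 < \<phi> x"
    using cube_where_continuous_gt[OF assms(2,11)] by metis
  then show ?thesis
    using is_solution_Q_bounded_if_gt_on_cube[OF assms(1) less_imp_le[OF assms(13)] \<open>0 < r\<close>
        \<open>0 < \<phi> x0 / 2\<close> cube]
    by (intro bdd_aboveI) blast
qed

end
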